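(* For all integers $n \geq k \geq 1$ there exists an oriented graph on $n$ vertices with exactly $k$ weak kings.
   Context: An oriented graph is a digraph with no loops and no pair of symmetric arcs. For vertices $u,v$ write $u(1\text{-}0)v$ if there is an arc from $u$ to $v$, and $u(0\text{-}0)v$ if there is no arc between $u$ and $v$. A vertex $v$ is weakly reachable within two steps from $u$ if $u(1\text{-}0)v$, or $u(0\text{-}0)v$, or for some vertex $w$ one has $u(1\text{-}0)w(1\text{-}0)v$, or $u(1\text{-}0)w(0\text{-}0)v$, or $u(0\text{-}0)w(1\text{-}0)v$. A vertex $u$ of an oriented graph $D$ is a weak king if every other vertex of $D$ is weakly reachable within two steps from $u$. *)

theory Defs
  imports Main
begin

definition oriented_graph :: "'a set \<Rightarrow> ('a \<times> 'a) set \<Rightarrow> bool" where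
  "oriented_graph V A \<longleftrightarrow> A \<subseteq> V \<times> V \<and> (\<forall>v. (v, v) \<notin> A)
     \<and> (\<forall>u v. (u, v) \<in> A \<longrightarrow> (v, u) \<notin> A)"

definition arc10 :: "('a \<times> 'a) set \<Rightarrow> 'a \<Rightarrow> 'a \<Rightarrow> bool" where
  "arc10 A u v \<longleftrightarrow> (u, v) \<in> A"

definition arc00 :: "('a \<times> 'a) set \<Rightarrow> 'a \<Rightarrow> 'a \<Rightarrow> bool" where
  "arc00 A u v \<longleftrightarrow> (u, v) \<notin> A \<and> (v, u) \<notin> A"

definition weakly_reachable2 :: "'a set \<Rightarrow> ('a \<times> 'a) set \<Rightarrow> 'a \<Rightarrow> 'a \<Rightarrow> bool" where
  "weakly_reachable2 V A u v \<longleftrightarrow>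
     arc10 A u v \<or> arc00 A u v \<or>
     (\<exists>w\<in>V. (arc10 A u w \<and> arc10 A w v) \<or> (arc10 A u w \<and> arc00 A w v)
            \<or> (arc00 A u w \<and> arc10 A w v))"

definition weak_king :: "'a set \<Rightarrow> ('a \<times> 'a) set \<Rightarrow> 'a \<Rightarrow> bool" where
  "weak_king V A u \<longleftrightarrow> u \<in> V \<and> (\<forall>v\<in>V. v \<noteq> u \<longrightarrow> weakly_reachable2 V A u v)"

end

theory Submission
  imports Defs
begin

text \<open>A vertex without in-arcs weakly reaches every other vertex in one step, so it is a weak
  king. Conversely, an out-neighbour of a source that has no out-arcs itself cannot weakly reach
  that source at all. In the out-star in which one centre points at \<open>n - k\<close> of \<open>n\<close> vertices,
  the weak kings are therefore exactly the \<open>k\<close> vertices outside the set of leaves.\<close>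

lemma weak_king_if_no_in_arcs:
  assumes "u \<in> V" and "\<forall>w. (w, u) \<notin> A"
  shows "weak_king V A u"
  using assms unfolding weak_king_def weakly_reachable2_def arc10_def arc00_def by auto

lemma not_weakly_reachable2_source_from_sink:
  assumes "(v, u) \<in> A" and "\<forall>w. (u, w) \<notin> A" and "\<forall>w. (w, v) \<notin> A"
  shows "\<not> weakly_reachable2 V A u v"
  using assms unfolding weakly_reachable2_def arc10_def arc00_def by auto

lemma not_weak_king_if_sink_of_source:
  assumes "v \<in> V" and "u \<noteq> v" and "(v, u) \<in> A"
    and "\<forall>w. (u, w) \<notin> A" and "\<forall>w. (w, v) \<notin> A"
  shows "\<not> weak_king V A u"
  using assms not_weakly_reachable2_source_from_sink unfolding weak_king_def by metis

lemma oriented_graph_out_star: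
  assumes "c \<in> V" and "T \<subseteq> V - {c}"
  shows "oriented_graph V ({c} \<times> T)"
  using assms unfolding oriented_graph_def by auto

lemma weak_kings_out_star:
  assumes "c \<in> V" and "T \<subseteq> V - {c}"
  shows "{u \<in> V. weak_king V ({c} \<times> T) u} = V - T"
proof (intro set_eqI iffI)
  fix u assume "u \<in> {u \<in> V. weak_king V ({c} \<times> T) u}"
  moreover have "\<not> weak_king V ({c} \<times> T) u" if "u \<in> T"
    using assms that by (intro not_weak_king_if_sink_of_source[of c]) auto
  ultimately show "u \<in> V - T"
    by blast
next
  fix u assume "u \<in> V - T"
  then show "u \<in> {u \<in> V. weak_king V ({c} \<times> T) u}"
    by (auto intro: weak_king_if_no_in_arcs)
qed

theorem theorem7:
  fixes n k :: nat
  assumes "1 \<le> k" and "k \<le> n"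
  shows "\<exists>(V :: nat set) A. finite V \<and> card V = n \<and> oriented_graph V A
           \<and> card {u \<in> V. weak_king V A u} = k"
proof -
  have centre: "0 \<in> {0..<n}" and leaves: "{k..<n} \<subseteq> {0..<n} - {0}"
    using assms by auto
  have "{0..<n} - {k..<n} = {0..<k}"
    using assms by auto
  then have "card {u \<in> {0..<n}. weak_king {0..<n} ({0} \<times> {k..<n}) u} = k"
    using weak_kings_out_star[OF centre leaves] by simp
  with oriented_graph_out_star[OF centre leaves] show ?thesis
    by (intro exI[of _ "{0..<n}"] exI[of _ "{0} \<times> {k..<n}"]) simp
qed

end
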